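(* Let $G$ be a finite graph with $n$ vertices and maximum degree at most $\Delta$. For any $\epsilon>0$, taking $\lambda=e^{\frac{\Delta\log 2}{2\epsilon}}$, the average matching size $E(G,\lambda)$ is an $\epsilon n$-approximation of the maximum matching size of $G$, i.e. $|E(G,\lambda)-\mathrm{OPT}|\le\epsilon n$ where $\mathrm{OPT}$ is the size of a maximum matching.
   Context: For a finite graph $G$ and $\lambda>0$, $E(G,\lambda)=\sum_{M}|M|\lambda^{|M|}/Z(G,\lambda)$ with $Z(G,\lambda)=\sum_M\lambda^{|M|}$, both sums over all matchings $M$ of $G$. *)

theory Defs
  imports "HOL-Analysis.Analysis"
begin

definition simple_graph :: "'a set \<Rightarrow> 'a set set \<Rightarrow> bool" where
  "simple_graph V E \<longleftrightarrow> finite V \<and> (\<forall>e\<in>E. e \<subseteq> V \<and> card e = 2)"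

definition degree :: "'a set set \<Rightarrow> 'a \<Rightarrow> nat" where
  "degree E v = card {e \<in> E. v \<in> e}"

definition is_matching :: "'a set set \<Rightarrow> 'a set set \<Rightarrow> bool" where
  "is_matching E M \<longleftrightarrow> M \<subseteq> E \<and> (\<forall>e1\<in>M. \<forall>e2\<in>M. e1 \<noteq> e2 \<longrightarrow> e1 \<inter> e2 = {})"

definition matchings :: "'a set set \<Rightarrow> 'a set set set" where
  "matchings E = {M. is_matching E M}"

definition Zm :: "'a set set \<Rightarrow> real \<Rightarrow> real" where
  "Zm E lam = (\<Sum>M\<in>matchings E. lam ^ card M)"

definition avg_match :: "'a set set \<Rightarrow> real \<Rightarrow> real" where
  "avg_match E lam = (\<Sum>M\<in>matchings E. real (card M) * lam ^ card M) / Zm E lam"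

definition max_matching_size :: "'a set set \<Rightarrow> nat" where
  "max_matching_size E = Max (card ` matchings E)"

end

theory Submission
  imports Defs
begin

text \<open>
  Put lam = exp L. The Gibbs distribution on matchings with weights exp (L |M|) has mean
  size A = E(G,lam), and exp x \<ge> 1 + x bounds its partition function by Z \<le> N exp (L A),
  where N \<le> 2^|E| is the number of matchings. As Z \<ge> exp (L OPT), this gives
  L (OPT - A) \<le> |E| ln 2 \<le> n \<Delta> ln 2 / 2 = L \<epsilon> n by the handshake lemma.
\<close>

lemma partition_function_le_card_mul_exp_mean:
  fixes f :: "'b \<Rightarrow> real"
  assumes "finite S" and "S \<noteq> {}"
  defines "Z \<equiv> (\<Sum>x\<in>S. exp (f x))"
  defines "A \<equiv> (\<Sum>x\<in>S. f x * exp (f x)) / Z"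
  shows "Z * exp (- A) \<le> real (card S)"
proof -
  have "Z > 0"
    unfolding Z_def using assms(1,2) by (intro sum_pos) auto
  then have mean: "(\<Sum>x\<in>S. f x * exp (f x)) = A * Z"
    unfolding A_def by simp
  have "(\<Sum>x\<in>S. exp (f x) * exp (- A) * (1 - (f x - A)))
      = exp (- A) * (Z - ((\<Sum>x\<in>S. f x * exp (f x)) - A * Z))"
    unfolding Z_def
    by (simp add: algebra_simps sum_subtractf sum.distrib sum_distrib_left sum_distrib_right)
  then have "Z * exp (- A) = (\<Sum>x\<in>S. exp (f x) * exp (- A) * (1 - (f x - A)))"
    using mean by simp
  also have "\<dots> \<le> (\<Sum>x\<in>S. exp (f x) * exp (- A) * exp (- (f x - A)))"
  proof (intro sum_mono mult_left_mono)
    fix x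
    show "1 - (f x - A) \<le> exp (- (f x - A))"
      by (metis diff_conv_add_uminus exp_ge_add_one_self)
  qed simp
  also have "\<dots> = real (card S)"
    by (simp add: exp_add[symmetric])
  finally show ?thesis .
qed

lemma simple_graph_finite_edges:
  assumes "simple_graph V E"
  shows "finite E"
  using assms unfolding simple_graph_def by (meson Pow_iff finite_Pow_iff rev_finite_subset subsetI)

lemma sum_degree_eq_twice_card_edges:
  assumes "simple_graph V E"
  shows "(\<Sum>v\<in>V. degree E v) = 2 * card E"
proof -
  have fin: "finite V" "finite E"
    using assms simple_graph_finite_edges unfolding simple_graph_def by auto
  have "(\<Sum>v\<in>V. degree E v) = (\<Sum>v\<in>V. \<Sum>e\<in>E. if v \<in> e then 1::nat else 0)"
    unfolding degree_def using fin by (simp add: sum.If_cases Int_def)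
  also have "\<dots> = (\<Sum>e\<in>E. \<Sum>v\<in>V. if v \<in> e then 1 else 0)"
    by (rule sum.swap)
  also have "\<dots> = (\<Sum>e\<in>E. 2)"
  proof (rule sum.cong[OF refl])
    fix e assume "e \<in> E"
    with assms have "V \<inter> e = e" "card e = 2"
      unfolding simple_graph_def by auto
    then show "(\<Sum>v\<in>V. if v \<in> e then 1::nat else 0) = 2"
      by (simp add: sum.If_cases fin)
  qed
  finally show ?thesis by simp
qed

lemma twice_card_edges_le:
  assumes "simple_graph V E" and "\<forall>v\<in>V. degree E v \<le> \<Delta>"
  shows "2 * card E \<le> card V * \<Delta>"
proof -
  have "2 * card E = (\<Sum>v\<in>V. degree E v)"
    using sum_degree_eq_twice_card_edges[OF assms(1)] by simp
  also have "\<dots> \<le> (\<Sum>v\<in>V. \<Delta>)"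
    using assms(2) by (intro sum_mono) auto
  finally show ?thesis by simp
qed

lemma matchings_subset_Pow: "matchings E \<subseteq> Pow E"
  unfolding matchings_def is_matching_def by auto

lemma empty_in_matchings: "{} \<in> matchings E"
  unfolding matchings_def is_matching_def by auto

lemma finite_matchings: "finite E \<Longrightarrow> finite (matchings E)"
  using matchings_subset_Pow by (rule finite_subset) simp

lemma card_matchings_le: "finite E \<Longrightarrow> card (matchings E) \<le> 2 ^ card E"
  by (metis card_Pow card_mono finite_Pow_iff matchings_subset_Pow)

lemma max_matching_size_in:
  "finite E \<Longrightarrow> max_matching_size E \<in> card ` matchings E"
  unfolding max_matching_size_def using empty_in_matchings finite_matchings
  by (intro Max_in) auto

lemma card_le_max_matching_size:
  "finite E \<Longrightarrow> M \<in> matchings E \<Longrightarrow> card M \<le> max_matching_size E"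
  unfolding max_matching_size_def by (intro Max_ge) (auto simp: finite_matchings)

lemma max_matching_size_le_card_edges:
  "finite E \<Longrightarrow> max_matching_size E \<le> card E"
  using max_matching_size_in matchings_subset_Pow by (fastforce intro: card_mono)

lemma Zm_pos: "lam \<ge> 0 \<Longrightarrow> finite E \<Longrightarrow> Zm E lam > 0"
  unfolding Zm_def using empty_in_matchings finite_matchings
  by (intro sum_pos2[where i = "{}"]) auto

lemma avg_match_nonneg: "lam \<ge> 0 \<Longrightarrow> avg_match E lam \<ge> 0"
  unfolding avg_match_def Zm_def by (intro divide_nonneg_nonneg sum_nonneg) auto

lemma avg_match_le_max_matching_size:
  assumes "lam \<ge> 0" and "finite E"
  shows "avg_match E lam \<le> max_matching_size E"
proof -
  have "(\<Sum>M\<in>matchings E. card M * lam ^ card M)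
      \<le> (\<Sum>M\<in>matchings E. max_matching_size E * lam ^ card M)"
    using assms card_le_max_matching_size by (intro sum_mono mult_right_mono) auto
  also have "\<dots> = max_matching_size E * Zm E lam"
    unfolding Zm_def by (simp add: sum_distrib_left)
  finally show ?thesis
    unfolding avg_match_def using Zm_pos[OF assms] by (simp add: divide_le_eq)
qed

lemma max_matching_size_minus_avg_match_le:
  fixes L :: real
  assumes "finite E"
  shows "L * (max_matching_size E - avg_match E (exp L)) \<le> card E * ln 2"
proof -
  define S where "S = matchings E"
  define m where "m = max_matching_size E"
  define Z where "Z = (\<Sum>M\<in>S. exp (L * card M))"
  have pow: "exp L ^ k = exp (L * k)" for k :: nat
    by (simp add: exp_of_nat_mult[symmetric] mult.commute)
  have avg: "L * avg_match E (exp L) = (\<Sum>M\<in>S. L * card M * exp (L * card M)) / Z"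
    unfolding avg_match_def Zm_def S_def Z_def pow
    by (simp add: sum_distrib_left mult.assoc)
  have "Z \<ge> exp (L * m)"
  proof -
    obtain M where "M \<in> S" "card M = m"
      using max_matching_size_in[OF assms] unfolding S_def m_def by auto
    then show ?thesis
      unfolding Z_def using finite_matchings[OF assms] S_def
      by (metis (no_types, lifting) exp_ge_zero member_le_sum)
  qed
  then have "exp (L * m) * exp (- (L * avg_match E (exp L)))
      \<le> Z * exp (- (L * avg_match E (exp L)))"
    by (rule mult_right_mono) simp
  then have "exp (L * (m - avg_match E (exp L))) \<le> Z * exp (- (L * avg_match E (exp L)))"
    by (simp add: right_diff_distrib exp_add[symmetric])
  also have "\<dots> \<le> card S"
    unfolding avg Z_def
    using partition_function_le_card_mul_exp_mean[of S "\<lambda>M. L * card M"]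
      finite_matchings[OF assms] empty_in_matchings S_def by auto
  also have "\<dots> \<le> exp (card E * ln 2)"
    using card_matchings_le[OF assms] unfolding S_def
    by (simp add: exp_of_nat_mult)
  finally show ?thesis unfolding m_def by simp
qed

theorem lemma6:
  fixes V :: "'a set" and E :: "'a set set" and \<Delta> :: nat and \<epsilon> :: real
  assumes "simple_graph V E"
    and "\<forall>v\<in>V. degree E v \<le> \<Delta>"
    and "\<epsilon> > 0"
  shows "\<bar>avg_match E (exp (real \<Delta> * ln 2 / (2 * \<epsilon>))) - real (max_matching_size E)\<bar>
           \<le> \<epsilon> * real (card V)"
proof -
  define L where "L = real \<Delta> * ln 2 / (2 * \<epsilon>)"
  have fin: "finite E" using assms(1) by (rule simple_graph_finite_edges)
  have edges: "2 * card E \<le> card V * \<Delta>"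
    using assms(1,2) by (rule twice_card_edges_le)
  have "max_matching_size E - avg_match E (exp L) \<le> \<epsilon> * card V"
  proof (cases "\<Delta> = 0")
    case True
    then have "max_matching_size E = 0"
      using edges max_matching_size_le_card_edges[OF fin] by simp
    moreover have "0 \<le> \<epsilon> * card V" using assms(3) by simp
    ultimately show ?thesis using avg_match_nonneg[of "exp L" E] by simp
  next
    case False
    then have "L > 0" unfolding L_def using assms(3) by simp
    have "L * (max_matching_size E - avg_match E (exp L)) \<le> card E * ln 2"
      using fin by (rule max_matching_size_minus_avg_match_le)
    also have "\<dots> \<le> real (card V * \<Delta>) / 2 * ln 2"
      using of_nat_mono[OF edges, where 'a=real] by (intro mult_right_mono) auto
    also have "\<dots> = L * (\<epsilon> * card V)"
      unfolding L_def using assms(3) by (simp add: field_simps)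
    finally show ?thesis using \<open>L > 0\<close> by simp
  qed
  moreover have "avg_match E (exp L) \<le> max_matching_size E"
    using fin by (intro avg_match_le_max_matching_size) auto
  ultimately show ?thesis using assms(3) unfolding L_def by simp
qed

end
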